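(* Let $\gamma_\infty=\lim_{\epsilon\to+\infty}\gamma(\epsilon)=E\{Z_i\mid A_i=0,Y_i=1\}-E\{Z_i\mid A_i=1,Y_i=1\}$. If $\gamma_\infty\neq 0$ (i.e. the non-private algorithm $\mathscr{A}$ is not $0$-fair), then there exists $\hat\epsilon\in(0,+\infty)$ such that $|\gamma(\epsilon)|<|\gamma_\infty|$ for all $\epsilon\in(0,\hat\epsilon)$.
   Context: There are $n$ individuals indexed by $\mathcal{N}=\{1,\dots,n\}$. Individual $i$ is described by a random tuple $(X_i,A_i,Y_i)$, with features $X_i\in\mathcal{X}$, protected attribute $A_i\in\{0,1\}$ and qualification state $Y_i\in\{0,1\}$; the tuples are i.i.d. with a common distribution $\mathsf{F}$. A fixed function $r:\mathcal{X}\to\mathcal{R}$ is given, with $\mathcal{R}\subset[0,1]$ finite, and $R_i=r(X_i)$. Conditioning events $\{A_i=a,Y_i=1\}$ are assumed to have positive probability. For $\epsilon\ge0$, define $Z_{i,\epsilon}=\exp(\epsilon R_i/2)/\sum_{j=1}^n\exp(\epsilon R_j/2)$ (the probability that the exponential mechanism $\mathscr{A}_\epsilon$ selects $i$, given the scores) and $\gamma(\epsilon)=E\{Z_{i,\epsilon}\mid A_i=0,Y_i=1\}-E\{Z_{i,\epsilon}\mid A_i=1,Y_i=1\}$. Let $N_{\max}=|\{i: R_i=\max_j R_j\}|$ and $Z_i=0$ if $R_i\neq\max_jR_j$, $Z_i=1/N_{\max}$ otherwise; $E\{Z_i\}$ is the probability that the algorithm $\mathscr{A}$ selecting uniformly among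 individuals with the highest score selects $i$. The limit $\lim_{\epsilon\to+\infty}\gamma(\epsilon)$ exists and equals the stated difference of conditional expectations of $Z_i$. *)

theory Defs
  imports "HOL-Probability.Probability"
begin

text \<open>An individual is a triple (x, a, y) :: 'x \<times> bool \<times> bool, where the protected
attribute A and the qualification state Y in {0,1} are encoded as booleans
(True = 1, False = 0).\<close>

definition sample :: "nat \<Rightarrow> ('x \<times> bool \<times> bool) measure \<Rightarrow> (nat \<Rightarrow> 'x \<times> bool \<times> bool) measure" where
  "sample n F = PiM {1..n} (\<lambda>_. F)"

definition score :: "('x \<Rightarrow> real) \<Rightarrow> (nat \<Rightarrow> 'x \<times> bool \<times> bool) \<Rightarrow> nat \<Rightarrow> real" where
  "score r \<omega> j = r (fst (\<omega> j))"

definition Zexp :: "('x \<Rightarrow> real) \<Rightarrow> nat \<Rightarrow> real \<Rightarrow> nat \<Rightarrow> (nat \<Rightarrow> 'x \<times> bool \<times> bool) \<Rightarrow> real" where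
  "Zexp r n \<epsilon> i \<omega> = exp (\<epsilon> * score r \<omega> i / 2) / (\<Sum>j\<in>{1..n}. exp (\<epsilon> * score r \<omega> j / 2))"

definition Zmax :: "('x \<Rightarrow> real) \<Rightarrow> nat \<Rightarrow> nat \<Rightarrow> (nat \<Rightarrow> 'x \<times> bool \<times> bool) \<Rightarrow> real" where
  "Zmax r n i \<omega> =
     (let m = Max ((\<lambda>j. score r \<omega> j) ` {1..n});
          Nmax = card {j\<in>{1..n}. score r \<omega> j = m}
      in if score r \<omega> i = m then 1 / real Nmax else 0)"

definition grp_event :: "nat \<Rightarrow> ('x \<times> bool \<times> bool) measure \<Rightarrow> nat \<Rightarrow> bool \<Rightarrow> (nat \<Rightarrow> 'x \<times> bool \<times> bool) set" where
  "grp_event n F i a = {\<omega> \<in> space (sample n F). fst (snd (\<omega> i)) = a \<and> snd (snd (\<omega> i)) = True}"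

definition cond_expect :: "'a measure \<Rightarrow> ('a \<Rightarrow> real) \<Rightarrow> 'a set \<Rightarrow> real" where
  "cond_expect M f B = (\<integral>\<omega>. f \<omega> * indicator B \<omega> \<partial>M) / measure M B"

definition gamma :: "('x \<Rightarrow> real) \<Rightarrow> ('x \<times> bool \<times> bool) measure \<Rightarrow> nat \<Rightarrow> nat \<Rightarrow> real \<Rightarrow> real" where
  "gamma r F n i \<epsilon> =
     cond_expect (sample n F) (Zexp r n \<epsilon> i) (grp_event n F i False)
   - cond_expect (sample n F) (Zexp r n \<epsilon> i) (grp_event n F i True)"

definition gamma_inf :: "('x \<Rightarrow> real) \<Rightarrow> ('x \<times> bool \<times> bool) measure \<Rightarrow> nat \<Rightarrow> nat \<Rightarrow> real" where
  "gamma_inf r F n i =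
     cond_expect (sample n F) (Zmax r n i) (grp_event n F i False)
   - cond_expect (sample n F) (Zmax r n i) (grp_event n F i True)"

end

theory Submission
  imports Defs
begin

text \<open>For \<open>\<epsilon> \<ge> 0\<close> every weight \<open>exp (\<epsilon> R\<^sub>j / 2)\<close> lies in \<open>[1, exp (\<epsilon>/2)]\<close>, so the selection
probability \<open>Z\<^sub>i\<^sub>,\<^sub>\<epsilon>\<close>, and with it each of its conditional expectations, lies in
\<open>[exp (-\<epsilon>/2) / n, exp (\<epsilon>/2) / n]\<close>. Hence \<open>\<bar>\<gamma>(\<epsilon>)\<bar> \<le> 2 sinh (\<epsilon>/2) / n\<close>, which tends to \<open>0\<close> as
\<open>\<epsilon> \<rightarrow> 0\<^sup>+\<close> and therefore drops below \<open>\<bar>\<gamma>\<^sub>\<infinity>\<bar> > 0\<close> on some interval \<open>(0, \<epsilon>\<^sub>h)\<close>.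
Nothing about \<open>\<gamma>\<^sub>\<infinity>\<close> beyond \<open>\<gamma>\<^sub>\<infinity> \<noteq> 0\<close> is used.\<close>

lemma cond_expect_bounded:
  assumes "finite_measure M" and f: "f \<in> borel_measurable M" and B: "B \<in> sets M"
    and B_pos: "measure M B > 0" and f_bounded: "\<And>\<omega>. \<omega> \<in> space M \<Longrightarrow> f \<omega> \<in> {L..U}"
  shows "cond_expect M f B \<in> {L..U}"
proof -
  interpret finite_measure M by fact
  have integrable_f: "integrable M (\<lambda>\<omega>. f \<omega> * indicator B \<omega>)"
    by (rule integrable_const_bound[where B="\<bar>L\<bar> + \<bar>U\<bar>"])
       (use f B f_bounded in \<open>auto simp: indicator_def intro!: AE_I2 split: if_splits\<close>, fastforce+)
  have integrable_const: "integrable M (\<lambda>\<omega>. c * indicator B \<omega>)" for c :: real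
    using B by (intro integrable_mult_right) (auto simp: emeasure_eq_measure)
  have integral_const: "(\<integral>\<omega>. c * indicator B \<omega> \<partial>M) = c * measure M B" for c :: real
    using B by simp
  have "L * measure M B \<le> (\<integral>\<omega>. f \<omega> * indicator B \<omega> \<partial>M)"
    unfolding integral_const[symmetric] using f_bounded
    by (intro integral_mono[OF integrable_const integrable_f]) (auto simp: indicator_def)
  moreover have "(\<integral>\<omega>. f \<omega> * indicator B \<omega> \<partial>M) \<le> U * measure M B"
    unfolding integral_const[symmetric] using f_bounded
    by (intro integral_mono[OF integrable_f integrable_const]) (auto simp: indicator_def)
  ultimately show ?thesis
    using B_pos by (simp add: cond_expect_def field_simps)
qed

lemma Zexp_bounded:
  fixes r :: "'x \<Rightarrow> real"
  assumes r_range: "range r \<subseteq> {0..1}" and n: "n \<ge> 1" and \<epsilon>: "\<epsilon> \<ge> 0"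
  shows "Zexp r n \<epsilon> i \<omega> \<in> {exp (-\<epsilon>/2) / n .. exp (\<epsilon>/2) / n}"
proof -
  define w where "w j = exp (\<epsilon> * score r \<omega> j / 2)" for j
  have w_bounded: "1 \<le> w j \<and> w j \<le> exp (\<epsilon>/2)" for j
  proof -
    have "score r \<omega> j \<in> {0..1}"
      using r_range unfolding score_def by blast
    then show ?thesis
      using \<epsilon> by (auto simp: w_def mult_left_le)
  qed
  have "real n \<le> sum w {1..n}"
    using sum_mono[of "{1..n}" "\<lambda>_. 1" w] w_bounded by simp
  moreover have "sum w {1..n} \<le> n * exp (\<epsilon>/2)"
    using sum_mono[of "{1..n}" w "\<lambda>_. exp (\<epsilon>/2)"] w_bounded by simp
  moreover have "Zexp r n \<epsilon> i \<omega> = w i / sum w {1..n}"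
    by (simp add: Zexp_def w_def)
  moreover have "exp (-\<epsilon>/2) / n = 1 / (n * exp (\<epsilon>/2))"
    by (simp add: exp_minus field_simps)
  ultimately show ?thesis
    using w_bounded[of i] n
    by (auto intro: frac_le order_trans[OF _ frac_le[of 1 "w i"]])
qed

lemma prob_space_sample: "prob_space F \<Longrightarrow> prob_space (sample n F)"
  unfolding sample_def by (rule prob_space_PiM)

lemma measurable_sample_component:
  "j \<in> {1..n} \<Longrightarrow> (\<lambda>\<omega>. \<omega> j) \<in> sample n F \<rightarrow>\<^sub>M F"
  unfolding sample_def by (rule measurable_component_singleton)

lemma borel_measurable_Zexp:
  assumes r_meas: "(\<lambda>t. r (fst t)) \<in> borel_measurable F" and i: "i \<in> {1..n}"
  shows "Zexp r n \<epsilon> i \<in> borel_measurable (sample n F)"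
proof -
  have "(\<lambda>\<omega>. score r \<omega> j) \<in> borel_measurable (sample n F)" if "j \<in> {1..n}" for j
    unfolding score_def using measurable_compose[OF measurable_sample_component[OF that] r_meas]
    by simp
  then show ?thesis
    unfolding Zexp_def using i by measurable
qed

lemma grp_event_eq_vimage:
  assumes "i \<in> {1..n}"
  shows "grp_event n F i a =
    (\<lambda>\<omega>. \<omega> i) -` {t \<in> space F. fst (snd t) = a \<and> snd (snd t) = True} \<inter> space (sample n F)"
  using measurable_space[OF measurable_sample_component[OF assms]]
  unfolding grp_event_def by auto

lemma
  assumes F_prob: "prob_space F"
    and A_meas: "(\<lambda>t. fst (snd t)) \<in> F \<rightarrow>\<^sub>M count_space UNIV"
    and Y_meas: "(\<lambda>t. snd (snd t)) \<in> F \<rightarrow>\<^sub>M count_space UNIV"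
    and i: "i \<in> {1..n}"
  shows sets_grp_event: "grp_event n F i a \<in> sets (sample n F)"
    and measure_grp_event: "measure (sample n F) (grp_event n F i a) =
      measure F {t \<in> space F. fst (snd t) = a \<and> snd (snd t) = True}"
proof -
  let ?S = "{t \<in> space F. fst (snd t) = a \<and> snd (snd t) = True}"
  have "?S = ((\<lambda>t. fst (snd t)) -` {a} \<inter> space F) \<inter> ((\<lambda>t. snd (snd t)) -` {True} \<inter> space F)"
    by auto
  also have "\<dots> \<in> sets F"
    using measurable_sets[OF A_meas] measurable_sets[OF Y_meas] by auto
  finally have S: "?S \<in> sets F" .
  note component = measurable_sample_component[OF i]
  show "grp_event n F i a \<in> sets (sample n F)"
    unfolding grp_event_eq_vimage[OF i] using measurable_sets[OF component S] .
  have "distr (sample n F) F (\<lambda>\<omega>. \<omega> i) = F"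
    unfolding sample_def using F_prob i by (intro distr_PiM_component)
  then show "measure (sample n F) (grp_event n F i a) = measure F ?S"
    unfolding grp_event_eq_vimage[OF i] by (metis measure_distr[OF component S])
qed

lemma abs_gamma_le_sinh:
  fixes F :: "('x \<times> bool \<times> bool) measure" and r :: "'x \<Rightarrow> real"
  assumes F_prob: "prob_space F"
    and r_meas: "(\<lambda>t. r (fst t)) \<in> borel_measurable F"
    and A_meas: "(\<lambda>t. fst (snd t)) \<in> F \<rightarrow>\<^sub>M count_space UNIV"
    and Y_meas: "(\<lambda>t. snd (snd t)) \<in> F \<rightarrow>\<^sub>M count_space UNIV"
    and r_range: "range r \<subseteq> {0..1}"
    and i: "i \<in> {1..n}"
    and pos: "\<And>a. measure F {t \<in> space F. fst (snd t) = a \<and> snd (snd t) = True} > 0"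
    and \<epsilon>: "\<epsilon> \<ge> 0"
  shows "\<bar>gamma r F n i \<epsilon>\<bar> \<le> 2 * sinh (\<epsilon>/2) / n"
proof -
  interpret prob_space "sample n F"
    using F_prob by (rule prob_space_sample)
  have n: "n \<ge> 1" using i by simp
  have cond_expect_Zexp: "cond_expect (sample n F) (Zexp r n \<epsilon> i) (grp_event n F i a)
      \<in> {exp (-\<epsilon>/2) / n .. exp (\<epsilon>/2) / n}" for a
    using Zexp_bounded[OF r_range n \<epsilon>] pos[of a]
    by (intro cond_expect_bounded finite_measure_axioms borel_measurable_Zexp r_meas i
        sets_grp_event F_prob A_meas Y_meas) (simp_all add: measure_grp_event[OF F_prob A_meas Y_meas i])
  have "\<bar>gamma r F n i \<epsilon>\<bar> \<le> exp (\<epsilon>/2) / n - exp (-\<epsilon>/2) / n"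
    using cond_expect_Zexp[of False] cond_expect_Zexp[of True]
    unfolding gamma_def atLeastAtMost_iff by linarith
  also have "\<dots> = 2 * sinh (\<epsilon>/2) / n"
    by (simp add: sinh_def diff_divide_distrib)
  finally show ?thesis .
qed

theorem theorem3:
  fixes F :: "('x \<times> bool \<times> bool) measure"
    and r :: "'x \<Rightarrow> real"
    and n i :: nat
  assumes F_prob: "prob_space F"
    and r_meas: "(\<lambda>t. r (fst t)) \<in> borel_measurable F"
    and A_meas: "(\<lambda>t. fst (snd t)) \<in> F \<rightarrow>\<^sub>M count_space UNIV"
    and Y_meas: "(\<lambda>t. snd (snd t)) \<in> F \<rightarrow>\<^sub>M count_space UNIV"
    and r_fin: "finite (range r)"
    and r_range: "range r \<subseteq> {0..1}"
    and i_in: "i \<in> {1..n}"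
    and pos: "\<And>a. measure F {t \<in> space F. fst (snd t) = a \<and> snd (snd t) = True} > 0"
    and nonfair: "gamma_inf r F n i \<noteq> 0"
  shows "\<exists>\<epsilon>h>0. \<forall>\<epsilon>\<in>{0<..<\<epsilon>h}. \<bar>gamma r F n i \<epsilon>\<bar> < \<bar>gamma_inf r F n i\<bar>"
proof -
  have "((\<lambda>\<epsilon>. 2 * sinh (\<epsilon>/2) / n) \<longlongrightarrow> 2 * sinh (0/2) / n) (at_right 0)"
    using i_in by (intro tendsto_intros) auto
  then have "eventually (\<lambda>\<epsilon>. 2 * sinh (\<epsilon>/2) / n < \<bar>gamma_inf r F n i\<bar>) (at_right 0)"
    by (rule order_tendstoD(2)) (use nonfair in simp_all)
  then obtain \<epsilon>h :: real where "\<epsilon>h > 0"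
    and "\<And>\<epsilon>. 0 < \<epsilon> \<Longrightarrow> \<epsilon> < \<epsilon>h \<Longrightarrow> 2 * sinh (\<epsilon>/2) / n < \<bar>gamma_inf r F n i\<bar>"
    unfolding eventually_at_right_field by blast
  then show ?thesis
    using abs_gamma_le_sinh[OF F_prob r_meas A_meas Y_meas r_range i_in pos]
    by (meson greaterThanLessThan_iff le_less_trans less_imp_le)
qed

end
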